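(* Let $1<p<\infty$, $\frac1p+\frac1q=1$, and let $\mathcal{U}$ be a nonprincipal ultrafilter on $\mathbb{N}$. Let $R_p$ and $R_q$ denote the projections on $(L^{p})^{\mathcal{U}}$ and $(L^{q})^{\mathcal{U}}$ given by $R_s[(f_n)_{n,\mathcal{U}}]=\lim_{r\to\infty}(f_nI(|f_n|>r))_{n,\mathcal{U}}$ ($s=p,q$). Then $R_p^{*}=R_q$ under the duality $(L^{p})^{\mathcal{U}*}=(L^{q})^{\mathcal{U}}$; that is, for all $(f_n)_{n,\mathcal{U}}\in(L^{p})^{\mathcal{U}}$ and $(g_n)_{n,\mathcal{U}}\in(L^{q})^{\mathcal{U}}$, $\langle R_p[(f_n)_{n,\mathcal{U}}],(g_n)_{n,\mathcal{U}}\rangle=\langle (f_n)_{n,\mathcal{U}},R_q[(g_n)_{n,\mathcal{U}}]\rangle$.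
   Context: $L^{p}=L^{p}([0,1],\mu)$, $\mu$ Lebesgue measure, real scalars; $(L^{p})^{\mathcal{U}}$ is the ultrapower of $L^p$ and $(f_n)_{n,\mathcal{U}}$ the class of a bounded sequence. The limit defining $R_s$ exists in norm and $R_s$ is a bounded linear projection. The dual pairing is $\langle (f_n)_{n,\mathcal{U}},(g_n)_{n,\mathcal{U}}\rangle=\lim_{n,\mathcal{U}}\int f_ng_n\,d\mu$, which identifies $(L^{q})^{\mathcal{U}}$ with the dual of $(L^{p})^{\mathcal{U}}$. $I(|f|>r)$ is the indicator of $\{|f|>r\}$. *)

theory Defs
  imports "HOL-Analysis.Analysis"
begin

definition is_ultrafilter :: "'a filter \<Rightarrow> bool" where
  "is_ultrafilter U \<longleftrightarrow> U \<noteq> bot \<and> (\<forall>P. eventually P U \<or> eventually (\<lambda>x. \<not> P x) U)"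

text \<open>Nonprincipal: every cofinite set belongs to U.\<close>
definition nonprincipal :: "'a filter \<Rightarrow> bool" where
  "nonprincipal U \<longleftrightarrow> U \<le> cofinite"

abbreviation mu01 :: "real measure" where
  "mu01 \<equiv> lebesgue_on {0..1}"

definition in_Lp :: "real \<Rightarrow> (real \<Rightarrow> real) \<Rightarrow> bool" where
  "in_Lp p f \<longleftrightarrow> f \<in> borel_measurable mu01 \<and> integrable mu01 (\<lambda>x. \<bar>f x\<bar> powr p)"

definition Lp_norm :: "real \<Rightarrow> (real \<Rightarrow> real) \<Rightarrow> real" where
  "Lp_norm p f = (\<integral>x. \<bar>f x\<bar> powr p \<partial>mu01) powr (1/p)"

text \<open>Bounded sequences in L^p: representatives of elements of the ultrapower.\<close>
definition bounded_Lp_seq :: "real \<Rightarrow> (nat \<Rightarrow> real \<Rightarrow> real) \<Rightarrow> bool" where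
  "bounded_Lp_seq p f \<longleftrightarrow> (\<forall>n. in_Lp p (f n)) \<and> (\<exists>C. \<forall>n. Lp_norm p (f n) \<le> C)"

definition ultra_norm :: "nat filter \<Rightarrow> real \<Rightarrow> (nat \<Rightarrow> real \<Rightarrow> real) \<Rightarrow> real" where
  "ultra_norm U p h = Lim U (\<lambda>n. Lp_norm p (h n))"

definition trunc_above :: "real \<Rightarrow> (real \<Rightarrow> real) \<Rightarrow> real \<Rightarrow> real" where
  "trunc_above r f x = (if \<bar>f x\<bar> > r then f x else 0)"

text \<open>F represents R_s[(f_n)]: the class of F is the norm limit as r \<rightarrow> \<infinity> of
  the classes of (f_n I(|f_n|>r))_n in the ultrapower.\<close>
definition is_R :: "nat filter \<Rightarrow> real \<Rightarrow> (nat \<Rightarrow> real \<Rightarrow> real) \<Rightarrow> (nat \<Rightarrow> real \<Rightarrow> real) \<Rightarrow> bool" where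
  "is_R U s f F \<longleftrightarrow> bounded_Lp_seq s F \<and>
     ((\<lambda>r. ultra_norm U s (\<lambda>n x. trunc_above r (f n) x - F n x)) \<longlongrightarrow> 0) at_top"

definition ultra_pair :: "nat filter \<Rightarrow> (nat \<Rightarrow> real \<Rightarrow> real) \<Rightarrow> (nat \<Rightarrow> real \<Rightarrow> real) \<Rightarrow> real" where
  "ultra_pair U f g = Lim U (\<lambda>n. \<integral>x. f n x * g n x \<partial>mu01)"

end

theory Submission
  imports Defs
begin

text \<open>
  Both pairings equal \<open>\<langle>R\<^sub>p f, R\<^sub>q g\<rangle>\<close>, because \<open>\<langle>R\<^sub>p f, g - R\<^sub>q g\<rangle> = 0\<close> (and symmetrically).
  To see this, replace \<open>R\<^sub>p f\<close> by \<open>f I(|f| > r)\<close> and \<open>R\<^sub>q g\<close> by \<open>g I(|g| > s)\<close>; by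
  H\<ouml>lder's inequality the errors are small for large \<open>r\<close> and \<open>s\<close>. What remains,
  \<open>\<langle>f I(|f| > r), g - g I(|g| > s)\<rangle>\<close>, pairs a function with
  \<open>|f I(|f| > r)| \<le> |f|\<^sup>p r\<^sup>1\<^sup>-\<^sup>p\<close> against one bounded by \<open>s\<close>, so it is at most
  \<open>s r\<^sup>1\<^sup>-\<^sup>p \<parallel>f\<parallel>\<^sub>p\<^sup>p\<close>. Letting first \<open>r \<rightarrow> \<infinity>\<close> and then \<open>s \<rightarrow> \<infinity>\<close> gives \<open>0\<close>.
\<close>

lemma conjugate_exponent_gt_1:
  fixes p q :: real
  assumes "1 < p" "1/p + 1/q = 1"
  shows "1 < q"
proof -
  have "1/q = 1 - 1/p" "0 < 1/p" "1/p < 1" using assms by auto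
  then have "0 < 1/q" "1/q < 1" by auto
  then show ?thesis by (simp add: divide_less_eq zero_less_divide_1_iff)
qed

lemma Youngs_inequality_scaled:
  fixes a b p q A B :: real
  assumes "1 < p" "1/p + 1/q = 1" "a \<ge> 0" "b \<ge> 0" "A > 0" "B > 0"
  shows "a * b \<le> A powr (1/p) * B powr (1/q) * (a powr p / (p * A) + b powr q / (q * B))"
proof -
  have q: "1 < q" using assms(1,2) by (rule conjugate_exponent_gt_1)
  define \<alpha> where "\<alpha> = A powr (1/p)"
  define \<beta> where "\<beta> = B powr (1/q)"
  have \<alpha>: "\<alpha> > 0" "\<alpha> powr p = A" and \<beta>: "\<beta> > 0" "\<beta> powr q = B"
    using assms q by (auto simp: \<alpha>_def \<beta>_def powr_powr)
  have "(a / \<alpha>) * (b / \<beta>) \<le> (a / \<alpha>) powr p / p + (b / \<beta>) powr q / q"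
    by (rule Youngs_inequality) (use assms q \<alpha> \<beta> in auto)
  also have "\<dots> = a powr p / (p * A) + b powr q / (q * B)"
    using \<alpha> \<beta> assms by (simp add: powr_divide mult.commute)
  finally show ?thesis
    using \<alpha> \<beta> by (simp add: \<alpha>_def[symmetric] \<beta>_def[symmetric] field_simps)
qed

lemma Lp_norm_nonneg: "Lp_norm p u \<ge> 0"
  by (simp add: Lp_norm_def)

lemma Lp_norm_powr:
  assumes "p > 0"
  shows "Lp_norm p u powr p = (\<integral>x. \<bar>u x\<bar> powr p \<partial>mu01)"
  using assms by (simp add: Lp_norm_def powr_powr)

lemma integrable_mult_Lp:
  assumes "1 < p" "1/p + 1/q = 1" "in_Lp p u" "in_Lp q v"
  shows "integrable mu01 (\<lambda>x. u x * v x)"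
proof (rule Bochner_Integration.integrable_bound)
  show "integrable mu01 (\<lambda>x. \<bar>u x\<bar> powr p / p + \<bar>v x\<bar> powr q / q)"
    using assms(3,4) by (auto simp: in_Lp_def)
  have "1 < q" using assms(1,2) by (rule conjugate_exponent_gt_1)
  then show "AE x in mu01. norm (u x * v x) \<le> norm (\<bar>u x\<bar> powr p / p + \<bar>v x\<bar> powr q / q)"
    using Youngs_inequality[of p q "\<bar>u x\<bar>" "\<bar>v x\<bar>" for x] assms(1,2) by (auto simp: abs_mult)
  show "(\<lambda>x. u x * v x) \<in> borel_measurable mu01"
    using assms(3,4) by (auto simp: in_Lp_def)
qed

lemma Holder_inequality:
  assumes p: "1 < p" and pq: "1/p + 1/q = 1" and u: "in_Lp p u" and v: "in_Lp q v"
  shows "\<bar>\<integral>x. u x * v x \<partial>mu01\<bar> \<le> Lp_norm p u * Lp_norm q v"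
proof -
  have iu: "integrable mu01 (\<lambda>x. \<bar>u x\<bar> powr p)" and iv: "integrable mu01 (\<lambda>x. \<bar>v x\<bar> powr q)"
    using u v by (auto simp: in_Lp_def)
  define A where "A = (\<integral>x. \<bar>u x\<bar> powr p \<partial>mu01)"
  define B where "B = (\<integral>x. \<bar>v x\<bar> powr q \<partial>mu01)"
  have norms: "Lp_norm p u = A powr (1/p)" "Lp_norm q v = B powr (1/q)"
    by (simp_all add: Lp_norm_def A_def B_def)
  show ?thesis
  proof (cases "A > 0 \<and> B > 0")
    case True
    have "\<bar>\<integral>x. u x * v x \<partial>mu01\<bar> \<le>
        (\<integral>x. A powr (1/p) * B powr (1/q) * (\<bar>u x\<bar> powr p / (p * A) + \<bar>v x\<bar> powr q / (q * B)) \<partial>mu01)"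
      using iu iv True Youngs_inequality_scaled[OF p pq abs_ge_zero abs_ge_zero]
      by (intro integral_abs_bound_integral integrable_mult_Lp[OF p pq u v]) (auto simp: abs_mult)
    also have "\<dots> = A powr (1/p) * B powr (1/q) * (1/p + 1/q)"
      using iu iv True by (simp add: A_def B_def)
    finally show ?thesis using norms pq by simp
  next
    case False
    then have "A = 0 \<or> B = 0" by (auto simp: A_def B_def not_less intro: antisym)
    then have "(AE x in mu01. \<bar>u x\<bar> powr p = 0) \<or> (AE x in mu01. \<bar>v x\<bar> powr q = 0)"
      using integral_nonneg_eq_0_iff_AE[OF iu] integral_nonneg_eq_0_iff_AE[OF iv]
      by (auto simp: A_def B_def)
    then have "AE x in mu01. u x * v x = 0"
      by (elim disjE; elim AE_mp) auto
    then have "(\<integral>x. u x * v x \<partial>mu01) = 0"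
      by (simp add: integral_eq_zero_AE)
    then show ?thesis by (simp add: Lp_norm_nonneg)
  qed
qed

lemma abs_diff_powr_le:
  fixes a b p :: real
  assumes "p > 0"
  shows "\<bar>a - b\<bar> powr p \<le> 2 powr p * (\<bar>a\<bar> powr p + \<bar>b\<bar> powr p)"
proof -
  have "\<bar>a - b\<bar> powr p \<le> (2 * max \<bar>a\<bar> \<bar>b\<bar>) powr p"
    by (rule powr_mono2) (use assms in auto)
  also have "\<dots> = 2 powr p * max \<bar>a\<bar> \<bar>b\<bar> powr p" by (simp add: powr_mult)
  also have "\<dots> \<le> 2 powr p * (\<bar>a\<bar> powr p + \<bar>b\<bar> powr p)"
    by (intro mult_left_mono) (auto simp: max_def)
  finally show ?thesis .
qed

lemma
  assumes "p > 0" "in_Lp p u" "in_Lp p v"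
  shows in_Lp_diff: "in_Lp p (\<lambda>x. u x - v x)"
    and integral_abs_diff_powr_le: "(\<integral>x. \<bar>u x - v x\<bar> powr p \<partial>mu01) \<le>
      2 powr p * ((\<integral>x. \<bar>u x\<bar> powr p \<partial>mu01) + (\<integral>x. \<bar>v x\<bar> powr p \<partial>mu01))"
proof -
  have [measurable]: "u \<in> borel_measurable mu01" "v \<in> borel_measurable mu01"
    and iu: "integrable mu01 (\<lambda>x. \<bar>u x\<bar> powr p)" and iv: "integrable mu01 (\<lambda>x. \<bar>v x\<bar> powr p)"
    using assms by (auto simp: in_Lp_def)
  have ib: "integrable mu01 (\<lambda>x. 2 powr p * (\<bar>u x\<bar> powr p + \<bar>v x\<bar> powr p))"
    using iu iv by auto
  have id: "integrable mu01 (\<lambda>x. \<bar>u x - v x\<bar> powr p)"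
    by (rule Bochner_Integration.integrable_bound[OF ib]) (use abs_diff_powr_le[OF assms(1)] in auto)
  then show "in_Lp p (\<lambda>x. u x - v x)" by (auto simp: in_Lp_def)
  have "(\<integral>x. \<bar>u x - v x\<bar> powr p \<partial>mu01) \<le> (\<integral>x. 2 powr p * (\<bar>u x\<bar> powr p + \<bar>v x\<bar> powr p) \<partial>mu01)"
    by (rule integral_mono[OF id ib]) (use abs_diff_powr_le[OF assms(1)] in auto)
  with iu iv show "(\<integral>x. \<bar>u x - v x\<bar> powr p \<partial>mu01) \<le>
      2 powr p * ((\<integral>x. \<bar>u x\<bar> powr p \<partial>mu01) + (\<integral>x. \<bar>v x\<bar> powr p \<partial>mu01))"
    by simp
qed

lemma bounded_Lp_seq_diff:
  assumes p: "p > 0" and u: "bounded_Lp_seq p u" and v: "bounded_Lp_seq p v"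
  shows "bounded_Lp_seq p (\<lambda>n x. u n x - v n x)"
proof -
  obtain Cu Cv where Cu: "\<And>n. Lp_norm p (u n) \<le> Cu" and Cv: "\<And>n. Lp_norm p (v n) \<le> Cv"
    using u v by (auto simp: bounded_Lp_seq_def)
  have Lp: "in_Lp p (u n)" "in_Lp p (v n)" for n
    using u v by (auto simp: bounded_Lp_seq_def)
  have "Lp_norm p (\<lambda>x. u n x - v n x) \<le> (2 powr p * (Cu powr p + Cv powr p)) powr (1/p)" for n
  proof -
    have "Lp_norm p (u n) powr p \<le> Cu powr p" "Lp_norm p (v n) powr p \<le> Cv powr p"
      using Cu Cv p by (auto intro: powr_mono2 Lp_norm_nonneg)
    then have "(\<integral>x. \<bar>u n x - v n x\<bar> powr p \<partial>mu01) \<le> 2 powr p * (Cu powr p + Cv powr p)"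
      using integral_abs_diff_powr_le[OF p Lp(1)[of n] Lp(2)[of n]] p
      by (simp add: Lp_norm_powr) (smt (verit) mult_left_mono powr_ge_zero)
    then show ?thesis
      unfolding Lp_norm_def using p by (auto intro: powr_mono2)
  qed
  with Lp p show ?thesis by (auto simp: bounded_Lp_seq_def intro: in_Lp_diff)
qed

lemma abs_trunc_above_le: "\<bar>trunc_above r u x\<bar> \<le> \<bar>u x\<bar>"
  by (simp add: trunc_above_def)

lemma abs_trunc_above_le_tail:
  fixes p r :: real
  assumes "1 \<le> p" "0 < r"
  shows "\<bar>trunc_above r u x\<bar> \<le> \<bar>u x\<bar> powr p * r powr (1 - p)"
proof (cases "\<bar>u x\<bar> > r")
  case True
  then have "\<bar>u x\<bar> = \<bar>u x\<bar> powr p * \<bar>u x\<bar> powr (1 - p)"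
    using assms by (simp flip: powr_add)
  also have "\<dots> \<le> \<bar>u x\<bar> powr p * r powr (1 - p)"
    by (intro mult_left_mono powr_mono2') (use assms True in auto)
  finally show ?thesis using True by (simp add: trunc_above_def)
qed (simp add: trunc_above_def)

lemma abs_sub_trunc_above_le: "0 \<le> s \<Longrightarrow> \<bar>u x - trunc_above s u x\<bar> \<le> s"
  by (simp add: trunc_above_def)

lemma
  assumes "p > 0" "in_Lp p u"
  shows in_Lp_trunc_above: "in_Lp p (trunc_above r u)"
    and Lp_norm_trunc_above_le: "Lp_norm p (trunc_above r u) \<le> Lp_norm p u"
proof -
  have [measurable]: "u \<in> borel_measurable mu01" and iu: "integrable mu01 (\<lambda>x. \<bar>u x\<bar> powr p)"
    using assms by (auto simp: in_Lp_def)
  have [measurable]: "trunc_above r u \<in> borel_measurable mu01"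
    unfolding trunc_above_def by measurable
  have le: "\<bar>trunc_above r u x\<bar> powr p \<le> \<bar>u x\<bar> powr p" for x
    by (rule powr_mono2) (use assms abs_trunc_above_le in auto)
  have it: "integrable mu01 (\<lambda>x. \<bar>trunc_above r u x\<bar> powr p)"
    by (rule Bochner_Integration.integrable_bound[OF iu]) (use le in auto)
  then show "in_Lp p (trunc_above r u)" by (auto simp: in_Lp_def)
  show "Lp_norm p (trunc_above r u) \<le> Lp_norm p u"
    unfolding Lp_norm_def by (rule powr_mono2) (use assms integral_mono[OF it iu] le in auto)
qed

lemma bounded_Lp_seq_trunc_above:
  assumes "p > 0" "bounded_Lp_seq p u"
  shows "bounded_Lp_seq p (\<lambda>n. trunc_above r (u n))"
  using assms in_Lp_trunc_above Lp_norm_trunc_above_le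
  unfolding bounded_Lp_seq_def by (meson order_trans)

lemma ultrafilter_tendsto_Lim_compact:
  fixes h :: "'a \<Rightarrow> 'b::t2_space"
  assumes U: "is_ultrafilter U" and K: "compact K" and hK: "eventually (\<lambda>n. h n \<in> K) U"
  shows "(h \<longlongrightarrow> Lim U h) U"
proof -
  have Ub: "U \<noteq> bot" using U by (simp add: is_ultrafilter_def)
  have "filtermap h U \<noteq> bot" and "eventually (\<lambda>x. x \<in> K) (filtermap h U)"
    using Ub hK by (simp_all add: filtermap_bot_iff eventually_filtermap)
  then obtain L where L: "inf (nhds L) (filtermap h U) \<noteq> bot"
    using compact_filter[THEN iffD1, OF K] by blast
  have "(h \<longlongrightarrow> L) U"
  proof (rule topological_tendstoI)
    fix S assume S: "open S" "L \<in> S"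
    show "eventually (\<lambda>n. h n \<in> S) U"
    proof (rule ccontr)
      assume "\<not> eventually (\<lambda>n. h n \<in> S) U"
      with U have "eventually (\<lambda>x. x \<notin> S) (filtermap h U)"
        by (auto simp: is_ultrafilter_def eventually_filtermap)
      moreover have "eventually (\<lambda>x. x \<in> S) (nhds L)" using S by (rule eventually_nhds_in_open)
      ultimately have "eventually (\<lambda>x. False) (inf (nhds L) (filtermap h U))"
        unfolding eventually_inf by blast
      with L show False by (simp add: eventually_False)
    qed
  qed
  with Ub show ?thesis by (metis tendsto_Lim trivial_limit_def)
qed

lemma ultrafilter_tendsto_Lim_bounded:
  fixes h :: "'a \<Rightarrow> real"
  assumes "is_ultrafilter U" and "\<And>n. \<bar>h n\<bar> \<le> B"
  shows "(h \<longlongrightarrow> Lim U h) U"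
  by (rule ultrafilter_tendsto_Lim_compact[OF assms(1) compact_cball[of 0 B]]) (use assms(2) in auto)

lemma ultra_norm_tendsto:
  assumes "is_ultrafilter U" "bounded_Lp_seq p u"
  shows "((\<lambda>n. Lp_norm p (u n)) \<longlongrightarrow> ultra_norm U p u) U"
proof -
  obtain C where "\<And>n. Lp_norm p (u n) \<le> C"
    using assms(2) by (auto simp: bounded_Lp_seq_def)
  then show ?thesis
    unfolding ultra_norm_def
    by (intro ultrafilter_tendsto_Lim_bounded[OF assms(1)]) (auto simp: Lp_norm_nonneg)
qed

lemma ultra_pair_tendsto:
  assumes "is_ultrafilter U" "1 < p" "1/p + 1/q = 1" "bounded_Lp_seq p u" "bounded_Lp_seq q v"
  shows "((\<lambda>n. \<integral>x. u n x * v n x \<partial>mu01) \<longlongrightarrow> ultra_pair U u v) U"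
proof -
  obtain Cu Cv where "\<And>n. Lp_norm p (u n) \<le> Cu" "\<And>n. Lp_norm q (v n) \<le> Cv"
    and "\<And>n. in_Lp p (u n)" "\<And>n. in_Lp q (v n)"
    using assms(4,5) by (auto simp: bounded_Lp_seq_def)
  then have "\<bar>\<integral>x. u n x * v n x \<partial>mu01\<bar> \<le> Cu * Cv" for n
    using Holder_inequality[OF assms(2,3)] Lp_norm_nonneg
    by (meson mult_mono order_trans)
  then show ?thesis
    unfolding ultra_pair_def by (rule ultrafilter_tendsto_Lim_bounded[OF assms(1)])
qed

lemma ultra_pair_commute: "ultra_pair U u v = ultra_pair U v u"
  by (simp add: ultra_pair_def mult.commute)

lemma ultra_pair_diff_right:
  assumes U: "is_ultrafilter U" and p: "1 < p" and pq: "1/p + 1/q = 1"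
    and u: "bounded_Lp_seq p u" and v: "bounded_Lp_seq q v" and w: "bounded_Lp_seq q w"
  shows "ultra_pair U u (\<lambda>n x. v n x - w n x) = ultra_pair U u v - ultra_pair U u w"
proof -
  have "q > 0" using conjugate_exponent_gt_1[OF p pq] by simp
  then have lim: "((\<lambda>n. \<integral>x. u n x * (v n x - w n x) \<partial>mu01) \<longlongrightarrow> ultra_pair U u (\<lambda>n x. v n x - w n x)) U"
    using ultra_pair_tendsto[OF U p pq u bounded_Lp_seq_diff[OF _ v w]] by simp
  have "integrable mu01 (\<lambda>x. u n x * v n x)" "integrable mu01 (\<lambda>x. u n x * w n x)" for n
    using u v w by (auto simp: bounded_Lp_seq_def intro: integrable_mult_Lp[OF p pq])
  then have "(\<integral>x. u n x * (v n x - w n x) \<partial>mu01) =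
      (\<integral>x. u n x * v n x \<partial>mu01) - (\<integral>x. u n x * w n x \<partial>mu01)" for n
    by (simp add: right_diff_distrib)
  then have "((\<lambda>n. \<integral>x. u n x * (v n x - w n x) \<partial>mu01) \<longlongrightarrow> ultra_pair U u v - ultra_pair U u w) U"
    using ultra_pair_tendsto[OF U p pq u v] ultra_pair_tendsto[OF U p pq u w] by (simp add: tendsto_diff)
  moreover have "U \<noteq> bot" using U by (simp add: is_ultrafilter_def)
  ultimately show ?thesis
    using tendsto_unique lim by blast
qed

lemma integral_trunc_above_tail_le:
  assumes p: "1 < p" and pq: "1/p + 1/q = 1" and u: "in_Lp p u" and v: "in_Lp q v"
    and C: "Lp_norm p u \<le> C" and r: "0 < r" and s: "0 \<le> s"
  shows "\<bar>\<integral>x. trunc_above r u x * (v x - trunc_above s v x) \<partial>mu01\<bar> \<le> s * (C powr p * r powr (1 - p))"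
proof -
  have q: "q > 0" using conjugate_exponent_gt_1[OF p pq] by simp
  have "\<bar>\<integral>x. trunc_above r u x * (v x - trunc_above s v x) \<partial>mu01\<bar> \<le> (\<integral>x. s * r powr (1 - p) * \<bar>u x\<bar> powr p \<partial>mu01)"
  proof (rule integral_abs_bound_integral)
    show "integrable mu01 (\<lambda>x. trunc_above r u x * (v x - trunc_above s v x))"
      using p q u v by (intro integrable_mult_Lp[OF p pq] in_Lp_diff in_Lp_trunc_above) auto
    show "integrable mu01 (\<lambda>x. s * r powr (1 - p) * \<bar>u x\<bar> powr p)"
      using u by (simp add: in_Lp_def)
    fix x
    have "\<bar>trunc_above r u x\<bar> * \<bar>v x - trunc_above s v x\<bar> \<le> (\<bar>u x\<bar> powr p * r powr (1 - p)) * s"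
      using p r s by (intro mult_mono abs_trunc_above_le_tail abs_sub_trunc_above_le) auto
    then show "\<bar>trunc_above r u x * (v x - trunc_above s v x)\<bar> \<le> s * r powr (1 - p) * \<bar>u x\<bar> powr p"
      by (simp add: abs_mult mult_ac)
  qed
  also have "\<dots> = s * r powr (1 - p) * Lp_norm p u powr p"
    using p by (simp add: Lp_norm_powr)
  also have "\<dots> \<le> s * r powr (1 - p) * C powr p"
    using C p s by (intro mult_left_mono powr_mono2) (auto simp: Lp_norm_nonneg)
  finally show ?thesis by (simp add: mult_ac)
qed

lemma integral_mult_diff_le:
  assumes p: "1 < p" and pq: "1/p + 1/q = 1"
    and u: "in_Lp p u" and F: "in_Lp p F" and v: "in_Lp q v" and G: "in_Lp q G"
    and Cu: "Lp_norm p u \<le> Cu" and Cv: "Lp_norm q v \<le> Cv" and CG: "Lp_norm q G \<le> CG"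
    and r: "0 < r" and s: "0 \<le> s"
  shows "\<bar>\<integral>x. F x * (v x - G x) \<partial>mu01\<bar> \<le>
    (Cv + CG) * Lp_norm p (\<lambda>x. trunc_above r u x - F x)
    + s * (Cu powr p * r powr (1 - p))
    + Cu * Lp_norm q (\<lambda>x. trunc_above s v x - G x)"
proof -
  have q: "q > 0" using conjugate_exponent_gt_1[OF p pq] by simp
  define A where "A = trunc_above r u"
  define B where "B = trunc_above s v"
  have A: "in_Lp p A" and AF: "in_Lp p (\<lambda>x. A x - F x)"
    using p u F unfolding A_def by (auto intro!: in_Lp_diff in_Lp_trunc_above)
  have vB: "in_Lp q (\<lambda>x. v x - B x)" and BG: "in_Lp q (\<lambda>x. B x - G x)"
    using q v G unfolding B_def by (auto intro!: in_Lp_diff in_Lp_trunc_above)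
  note int = integrable_mult_Lp[OF p pq]
  have "(\<integral>x. F x * (v x - G x) \<partial>mu01) = (\<integral>x. (A x - F x) * G x - (A x - F x) * v x
      + A x * (v x - B x) + A x * (B x - G x) \<partial>mu01)"
    by (rule Bochner_Integration.integral_cong) (auto simp: algebra_simps)
  also have "\<dots> = (\<integral>x. (A x - F x) * G x \<partial>mu01) - (\<integral>x. (A x - F x) * v x \<partial>mu01)
      + (\<integral>x. A x * (v x - B x) \<partial>mu01) + (\<integral>x. A x * (B x - G x) \<partial>mu01)"
    using int[OF AF G] int[OF AF v] int[OF A vB] int[OF A BG] by simp
  finally have split: "(\<integral>x. F x * (v x - G x) \<partial>mu01) = \<dots>" .
  have "\<bar>\<integral>x. (A x - F x) * G x \<partial>mu01\<bar> + \<bar>\<integral>x. (A x - F x) * v x \<partial>mu01\<bar> \<le>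
      Lp_norm p (\<lambda>x. A x - F x) * (Lp_norm q v + Lp_norm q G)"
    using Holder_inequality[OF p pq AF G] Holder_inequality[OF p pq AF v] by (simp add: algebra_simps)
  moreover have "Lp_norm p (\<lambda>x. A x - F x) * (Lp_norm q v + Lp_norm q G) \<le> (Cv + CG) * Lp_norm p (\<lambda>x. A x - F x)"
    using Cv CG by (subst mult.commute, intro mult_left_mono) (auto simp: Lp_norm_nonneg)
  moreover have "\<bar>\<integral>x. A x * (v x - B x) \<partial>mu01\<bar> \<le> s * (Cu powr p * r powr (1 - p))"
    unfolding A_def B_def by (rule integral_trunc_above_tail_le[OF p pq u v Cu r s])
  moreover have "\<bar>\<integral>x. A x * (B x - G x) \<partial>mu01\<bar> \<le> Lp_norm p A * Lp_norm q (\<lambda>x. B x - G x)"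
    by (rule Holder_inequality[OF p pq A BG])
  moreover have "Lp_norm p A * Lp_norm q (\<lambda>x. B x - G x) \<le> Cu * Lp_norm q (\<lambda>x. B x - G x)"
    using Lp_norm_trunc_above_le[OF _ u, of r] p Cu unfolding A_def
    by (intro mult_right_mono) (auto simp: Lp_norm_nonneg)
  ultimately show ?thesis
    unfolding split A_def B_def by linarith
qed

lemma eq_0_if_abs_le_vanishing:
  fixes X :: real and a b c :: "real \<Rightarrow> real"
  assumes a: "(a \<longlongrightarrow> 0) at_top" and b: "(b \<longlongrightarrow> 0) at_top" and c: "(c \<longlongrightarrow> 0) at_top"
    and le: "\<And>r s. 0 < r \<Longrightarrow> 0 < s \<Longrightarrow> \<bar>X\<bar> \<le> a r + s * b r + c s"
  shows "X = 0"
proof -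
  have "\<bar>X\<bar> \<le> c s" if s: "0 < s" for s
  proof (rule tendsto_lowerbound)
    show "((\<lambda>r. a r + s * b r + c s) \<longlongrightarrow> c s) at_top"
      using tendsto_add[OF tendsto_add[OF a tendsto_mult_right_zero[OF b]] tendsto_const] by simp
    show "\<forall>\<^sub>F r in at_top. \<bar>X\<bar> \<le> a r + s * b r + c s"
      using eventually_gt_at_top[of 0] by eventually_elim (use le s in auto)
  qed simp
  then have "\<bar>X\<bar> \<le> 0"
    by (intro tendsto_lowerbound[OF c]) (auto intro: eventually_mono[OF eventually_gt_at_top[of 0]])
  then show ?thesis by simp
qed

lemma ultra_pair_R_diff_eq_0:
  assumes U: "is_ultrafilter U" and p: "1 < p" and pq: "1/p + 1/q = 1"
    and f: "bounded_Lp_seq p f" and g: "bounded_Lp_seq q g"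
    and F: "is_R U p f F" and G: "is_R U q g G"
  shows "ultra_pair U F (\<lambda>n x. g n x - G n x) = 0"
proof -
  have q: "q > 0" using conjugate_exponent_gt_1[OF p pq] by simp
  obtain Cf Cg CG where Cf: "\<And>n. Lp_norm p (f n) \<le> Cf" and Cg: "\<And>n. Lp_norm q (g n) \<le> Cg"
    and CG: "\<And>n. Lp_norm q (G n) \<le> CG"
    using f g G by (auto simp: bounded_Lp_seq_def is_R_def)
  have F': "bounded_Lp_seq p F" and G': "bounded_Lp_seq q G"
    using F G by (simp_all add: is_R_def)
  define \<epsilon> where "\<epsilon> r = ultra_norm U p (\<lambda>n x. trunc_above r (f n) x - F n x)" for r
  define \<delta> where "\<delta> s = ultra_norm U q (\<lambda>n x. trunc_above s (g n) x - G n x)" for s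
  define bound where "bound r s n = (Cg + CG) * Lp_norm p (\<lambda>x. trunc_above r (f n) x - F n x)
    + s * (Cf powr p * r powr (1 - p)) + Cf * Lp_norm q (\<lambda>x. trunc_above s (g n) x - G n x)" for r s n
  have "\<bar>ultra_pair U F (\<lambda>n x. g n x - G n x)\<bar> \<le>
      (Cg + CG) * \<epsilon> r + s * (Cf powr p * r powr (1 - p)) + Cf * \<delta> s"
    if r: "0 < r" and s: "0 < s" for r s
  proof (rule tendsto_le[of U])
    show "U \<noteq> bot" using U by (simp add: is_ultrafilter_def)
    show "((\<lambda>n. \<bar>\<integral>x. F n x * (g n x - G n x) \<partial>mu01\<bar>) \<longlongrightarrow> \<bar>ultra_pair U F (\<lambda>n x. g n x - G n x)\<bar>) U"
      by (intro tendsto_rabs ultra_pair_tendsto[OF U p pq F' bounded_Lp_seq_diff[OF q g G']])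
    show "(bound r s \<longlongrightarrow> (Cg + CG) * \<epsilon> r + s * (Cf powr p * r powr (1 - p)) + Cf * \<delta> s) U"
      unfolding bound_def \<epsilon>_def \<delta>_def
      using p q f g F' G' bounded_Lp_seq_trunc_above bounded_Lp_seq_diff
      by (intro tendsto_intros ultra_norm_tendsto[OF U]) auto
    show "\<forall>\<^sub>F n in U. \<bar>\<integral>x. F n x * (g n x - G n x) \<partial>mu01\<bar> \<le> bound r s n"
      using f g F' G' Cf Cg CG r s unfolding bound_def bounded_Lp_seq_def
      by (intro always_eventually allI integral_mult_diff_le[OF p pq]) auto
  qed
  moreover have "(\<epsilon> \<longlongrightarrow> 0) at_top" "(\<delta> \<longlongrightarrow> 0) at_top"
    using F G unfolding \<epsilon>_def \<delta>_def is_R_def by simp_all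
  moreover have "((\<lambda>r. Cf powr p * r powr (1 - p)) \<longlongrightarrow> 0) at_top"
    using p by (intro tendsto_mult_right_zero tendsto_neg_powr) (auto simp: filterlim_ident)
  ultimately show ?thesis
    by (intro eq_0_if_abs_le_vanishing[where a = "\<lambda>r. (Cg + CG) * \<epsilon> r"
          and b = "\<lambda>r. Cf powr p * r powr (1 - p)" and c = "\<lambda>s. Cf * \<delta> s"])
      (auto intro: tendsto_mult_right_zero)
qed

theorem lemma2p4:
  fixes p q :: real and U :: "nat filter" and f g F G :: "nat \<Rightarrow> real \<Rightarrow> real"
  assumes "1 < p" and "1/p + 1/q = 1"
    and "is_ultrafilter U" and "nonprincipal U"
    and "bounded_Lp_seq p f" and "bounded_Lp_seq q g"
    and "is_R U p f F" and "is_R U q g G"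
  shows "ultra_pair U F g = ultra_pair U f G"
proof -
  note p = assms(1) and pq = assms(2) and U = assms(3) and f = assms(5) and g = assms(6)
    and RF = assms(7) and RG = assms(8)
  have q: "1 < q" using p pq by (rule conjugate_exponent_gt_1)
  have qp: "1/q + 1/p = 1" using pq by simp
  have F: "bounded_Lp_seq p F" and G: "bounded_Lp_seq q G"
    using RF RG by (simp_all add: is_R_def)
  have "ultra_pair U F g = ultra_pair U F G + ultra_pair U F (\<lambda>n x. g n x - G n x)"
    using ultra_pair_diff_right[OF U p pq F g G] by simp
  also have "\<dots> = ultra_pair U G F"
    using ultra_pair_R_diff_eq_0[OF U p pq f g RF RG] by (simp add: ultra_pair_commute)
  also have "\<dots> = ultra_pair U G F + ultra_pair U G (\<lambda>n x. f n x - F n x)"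
    using ultra_pair_R_diff_eq_0[OF U q qp g f RG RF] by simp
  also have "\<dots> = ultra_pair U f G"
    using ultra_pair_diff_right[OF U q qp G f F] by (simp add: ultra_pair_commute)
  finally show ?thesis .
qed

end
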